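(* Fix an integer $\alpha\ge2$, an integer $\Delta\ge3$, and parameters $\beta_\mu>\beta_\nu\ge\frac{\Delta-2}{\Delta}$ with $(\beta_\nu/\beta_\mu)^\alpha\beta_\mu<\frac{\Delta-2}{\Delta}$. There exists a constant $C'=C'(\Delta,\alpha,\beta_\nu,\beta_\mu)$ such that for every $\Delta$-regular graph $G=(V,E)$, with $\nu,\mu$ the Gibbs distributions of $(G,\beta_\nu)$ and $(G,\beta_\mu)$, $$\frac1{C'}\sum_{\sigma\in\{-1,+1\}^V}\mu(\sigma)\left(\frac{\nu(\sigma)}{\mu(\sigma)}+1\right)^\alpha\ \le\ D_{\chi^\alpha}(\nu\|\mu)\ \le\ C'\sum_{\sigma\in\{-1,+1\}^V}\mu(\sigma)\left(\frac{\nu(\sigma)}{\mu(\sigma)}+1\right)^\alpha.$$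
   Context: For a graph $G=(V,E)$ and $\gamma>0$, the Ising model $(G,\gamma)$ has Gibbs distribution on $\{-1,+1\}^V$ given by $\pi(\sigma)\propto\gamma^{m(\sigma)}$, where $m(\sigma)=|\{\{u,v\}\in E:\sigma_u=\sigma_v\}|$. The $\chi^\alpha$-divergence is $D_{\chi^\alpha}(\nu\|\mu)=\sum_\sigma\mu(\sigma)\cdot\frac12\left|\frac{\nu(\sigma)}{\mu(\sigma)}-1\right|^\alpha$. *)

theory Defs
  imports Main "HOL-Library.FuncSet" Complex_Main
begin

definition simple_graph :: "nat set \<Rightarrow> nat set set \<Rightarrow> bool" where
  "simple_graph V E \<longleftrightarrow> finite V \<and> (\<forall>e\<in>E. e \<subseteq> V \<and> card e = 2)"

definition regular_graph :: "nat \<Rightarrow> nat set \<Rightarrow> nat set set \<Rightarrow> bool" where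
  "regular_graph \<Delta> V E \<longleftrightarrow> simple_graph V E \<and> (\<forall>v\<in>V. card {e\<in>E. v \<in> e} = \<Delta>)"

definition spins :: "nat set \<Rightarrow> (nat \<Rightarrow> int) set" where
  "spins V = (V \<rightarrow>\<^sub>E {-1, 1})"

definition mono_edges :: "nat set set \<Rightarrow> (nat \<Rightarrow> int) \<Rightarrow> nat" where
  "mono_edges E \<sigma> = card {e\<in>E. \<exists>u v. e = {u, v} \<and> \<sigma> u = \<sigma> v}"

definition ising_weight :: "nat set set \<Rightarrow> real \<Rightarrow> (nat \<Rightarrow> int) \<Rightarrow> real" where
  "ising_weight E \<gamma> \<sigma> = \<gamma> ^ mono_edges E \<sigma>"

definition ising_gibbs :: "nat set \<Rightarrow> nat set set \<Rightarrow> real \<Rightarrow> (nat \<Rightarrow> int) \<Rightarrow> real" where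
  "ising_gibbs V E \<gamma> \<sigma> =
     ising_weight E \<gamma> \<sigma> / (\<Sum>\<tau>\<in>spins V. ising_weight E \<gamma> \<tau>)"

definition chi_alpha_div :: "nat \<Rightarrow> 'b set \<Rightarrow> ('b \<Rightarrow> real) \<Rightarrow> ('b \<Rightarrow> real) \<Rightarrow> real" where
  "chi_alpha_div \<alpha> \<Omega> \<nu> \<mu> = (\<Sum>\<sigma>\<in>\<Omega>. \<mu> \<sigma> * (1/2) * \<bar>\<nu> \<sigma> / \<mu> \<sigma> - 1\<bar> ^ \<alpha>)"

end

theory Submission
  imports Defs
begin

(* Write rho = beta_nu / beta_mu < 1 and m(sigma) for the number of monochromatic edges. Then
   nu/mu = c * rho ^ m(sigma), so two configurations with different values of m cannot both have
   density ratio within (1 - rho)/4 of 1. For an edge uv, flipping v changes m by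
   deg v - 2 * (number of monochromatic edges at v), and flipping u changes that number by exactly
   one; so among sigma, flip u sigma, flip v sigma, flip v (flip u sigma) two values of m differ,
   while all four have mu-weights within a factor max beta_mu (1/beta_mu) ^ (2 Delta) of each other.
   Since flips permute the configurations, averaging gives a lower bound on the divergence that
   depends only on Delta, alpha and the betas. Together with
   |r - 1|^alpha <= (r + 1)^alpha <= 2^alpha |r - 1|^alpha + 4^alpha
   this makes both sides comparable. *)

definition flip :: "nat \<Rightarrow> (nat \<Rightarrow> int) \<Rightarrow> nat \<Rightarrow> int" where
  "flip v \<sigma> = \<sigma>(v := - \<sigma> v)"

definition monochromatic_edges :: "nat set set \<Rightarrow> (nat \<Rightarrow> int) \<Rightarrow> nat set set" where
  "monochromatic_edges E \<sigma> = {e\<in>E. \<exists>u v. e = {u, v} \<and> \<sigma> u = \<sigma> v}"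

definition incident_edges :: "nat set set \<Rightarrow> nat \<Rightarrow> nat set set" where
  "incident_edges E v = {e\<in>E. v \<in> e}"

lemma mono_edges_eq_card: "mono_edges E \<sigma> = card (monochromatic_edges E \<sigma>)"
  by (simp add: mono_edges_def monochromatic_edges_def)

lemma doubleton_in_monochromatic_edges_iff:
  "{x, y} \<in> monochromatic_edges E \<sigma> \<longleftrightarrow> {x, y} \<in> E \<and> \<sigma> x = \<sigma> y"
  by (auto simp: monochromatic_edges_def doubleton_eq_iff)

lemma simple_graph_finite_edges: "simple_graph V E \<Longrightarrow> finite E"
  unfolding simple_graph_def by (metis Pow_iff finite_Pow_iff finite_subset subsetI)

lemma simple_graph_edgeE:
  assumes "simple_graph V E" "e \<in> E"
  obtains x y where "e = {x, y}" "x \<noteq> y" "x \<in> V" "y \<in> V"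
proof -
  have "card e = 2" "e \<subseteq> V" using assms unfolding simple_graph_def by auto
  then show ?thesis using that unfolding card_2_iff by blast
qed

lemma regular_graph_edges_nonempty:
  assumes "regular_graph \<Delta> V E" "V \<noteq> {}" "0 < \<Delta>"
  shows "E \<noteq> {}"
proof -
  obtain v where "v \<in> V" using assms(2) by blast
  then have "card {e\<in>E. v \<in> e} \<noteq> 0" using assms(1,3) by (simp add: regular_graph_def)
  then show ?thesis by auto
qed

lemma spins_values: "\<sigma> \<in> spins V \<Longrightarrow> x \<in> V \<Longrightarrow> \<sigma> x = -1 \<or> \<sigma> x = 1"
  unfolding spins_def by auto

lemma finite_spins: "finite V \<Longrightarrow> finite (spins V)"
  unfolding spins_def by (intro finite_PiE) auto

lemma spins_nonempty: "spins V \<noteq> {}"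
  unfolding spins_def by (simp add: PiE_eq_empty_iff)

lemma flip_in_spins: "\<sigma> \<in> spins V \<Longrightarrow> v \<in> V \<Longrightarrow> flip v \<sigma> \<in> spins V"
  unfolding spins_def flip_def by (auto simp: PiE_iff extensional_def)

lemma flip_flip [simp]: "flip v (flip v \<sigma>) = \<sigma>"
  by (auto simp: flip_def)

lemma sum_spins_flip:
  "v \<in> V \<Longrightarrow> (\<Sum>\<sigma>\<in>spins V. f (flip v \<sigma>)) = (\<Sum>\<sigma>\<in>spins V. f \<sigma>)"
  by (rule sum.reindex_bij_witness[where i="flip v" and j="flip v"]) (auto simp: flip_in_spins)

lemma monochromatic_edges_flip:
  assumes "simple_graph V E" "\<sigma> \<in> spins V"
  shows "monochromatic_edges E (flip v \<sigma>) = sym_diff (monochromatic_edges E \<sigma>) (incident_edges E v)"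
proof (rule set_eqI)
  fix e
  show "e \<in> monochromatic_edges E (flip v \<sigma>) \<longleftrightarrow>
    e \<in> sym_diff (monochromatic_edges E \<sigma>) (incident_edges E v)"
  proof (cases "e \<in> E")
    case True
    obtain x y where e: "e = {x, y}" "x \<noteq> y" and "x \<in> V" "y \<in> V"
      using assms(1) True by (rule simple_graph_edgeE)
    then have "\<sigma> x \<in> {-1, 1}" "\<sigma> y \<in> {-1, 1}"
      using spins_values[OF assms(2)] by blast+
    then have "flip v \<sigma> x = flip v \<sigma> y \<longleftrightarrow> (\<sigma> x = \<sigma> y \<longleftrightarrow> v \<notin> e)"
      using e by (auto simp: flip_def)
    then show ?thesis
      using True
      unfolding e incident_edges_def doubleton_in_monochromatic_edges_iff
        Un_iff Diff_iff mem_Collect_eq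
      by blast
  next
    case False
    then show ?thesis by (simp add: monochromatic_edges_def incident_edges_def)
  qed
qed

lemma card_symmetric_difference:
  assumes "finite A" "finite B"
  shows "int (card (sym_diff A B)) = int (card A) + int (card B) - 2 * int (card (A \<inter> B))"
proof -
  have "card (sym_diff A B) = card (A - B) + card (B - A)"
    using assms by (intro card_Un_disjoint) auto
  moreover have "card (A - B) = card A - card (A \<inter> B)" "card (B - A) = card B - card (A \<inter> B)"
    using assms by (simp_all add: card_Diff_subset_Int Int_commute)
  moreover have "card (A \<inter> B) \<le> card A" "card (A \<inter> B) \<le> card B"
    using assms by (simp_all add: card_mono)
  ultimately show ?thesis by linarith
qed

lemma mono_edges_flip:
  assumes "simple_graph V E" "\<sigma> \<in> spins V"
  shows "int (mono_edges E (flip v \<sigma>)) = int (mono_edges E \<sigma>) + int (card (incident_edges E v))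
    - 2 * int (card (monochromatic_edges E \<sigma> \<inter> incident_edges E v))"
proof -
  have "finite (monochromatic_edges E \<sigma>)" "finite (incident_edges E v)"
    using simple_graph_finite_edges[OF assms(1)]
    by (simp_all add: monochromatic_edges_def incident_edges_def)
  then show ?thesis
    unfolding mono_edges_eq_card monochromatic_edges_flip[OF assms]
    by (rule card_symmetric_difference)
qed

lemma mono_edges_flip_close:
  assumes "simple_graph V E" "\<sigma> \<in> spins V"
  shows "\<bar>int (mono_edges E (flip v \<sigma>)) - int (mono_edges E \<sigma>)\<bar> \<le> card (incident_edges E v)"
proof -
  have "card (monochromatic_edges E \<sigma> \<inter> incident_edges E v) \<le> card (incident_edges E v)"
    using simple_graph_finite_edges[OF assms(1)]
    by (intro card_mono) (auto simp: incident_edges_def)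
  then show ?thesis using mono_edges_flip[OF assms, of v] by linarith
qed

lemma incident_edges_Int:
  assumes "simple_graph V E" "{u, v} \<in> E"
  shows "incident_edges E u \<inter> incident_edges E v = {{u, v}}"
proof -
  have "card {u, v} = 2" using assms unfolding simple_graph_def by blast
  then have "u \<noteq> v" by auto
  have "e = {u, v}" if e: "e \<in> E" and "u \<in> e" "v \<in> e" for e
  proof -
    obtain x y where "e = {x, y}" using assms(1) e by (blast elim: simple_graph_edgeE)
    then show ?thesis using \<open>u \<in> e\<close> \<open>v \<in> e\<close> \<open>u \<noteq> v\<close> by auto
  qed
  then show ?thesis using assms(2) unfolding incident_edges_def by blast
qed

lemma card_monochromatic_incident_flip_neighbour:
  assumes "simple_graph V E" "{u, v} \<in> E" "\<sigma> \<in> spins V"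
  shows "card (monochromatic_edges E (flip u \<sigma>) \<inter> incident_edges E v)
    \<noteq> card (monochromatic_edges E \<sigma> \<inter> incident_edges E v)"
proof -
  let ?A = "monochromatic_edges E \<sigma> \<inter> incident_edges E v"
  have "monochromatic_edges E (flip u \<sigma>) \<inter> incident_edges E v = sym_diff ?A {{u, v}}"
    unfolding monochromatic_edges_flip[OF assms(1,3)] incident_edges_Int[OF assms(1,2), symmetric]
    by blast
  moreover have "finite ?A"
    using simple_graph_finite_edges[OF assms(1)] by (simp add: incident_edges_def)
  ultimately have "int (card (monochromatic_edges E (flip u \<sigma>) \<inter> incident_edges E v))
      = int (card ?A) + 1 - 2 * int (card (?A \<inter> {{u, v}}))"
    using card_symmetric_difference[of ?A "{{u, v}}"] by simp
  then show ?thesis by presburger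
qed

lemma mono_edges_flip_square:
  assumes "simple_graph V E" "{u, v} \<in> E" "\<sigma> \<in> spins V"
  shows "mono_edges E (flip v \<sigma>) \<noteq> mono_edges E \<sigma>
    \<or> mono_edges E (flip v (flip u \<sigma>)) \<noteq> mono_edges E (flip u \<sigma>)"
proof -
  have "u \<in> V" using assms(1,2) unfolding simple_graph_def by blast
  then have "flip u \<sigma> \<in> spins V" using assms(3) by (rule flip_in_spins[rotated])
  then show ?thesis
    using mono_edges_flip[OF assms(1,3), of v] mono_edges_flip[OF assms(1), of "flip u \<sigma>" v]
      card_monochromatic_incident_flip_neighbour[OF assms] by linarith
qed

lemma power_le_max_inverse_power:
  fixes b :: real
  assumes "b > 0" "a \<le> c + k" "c \<le> a + k"
  shows "b ^ a \<le> max b (1 / b) ^ k * b ^ c"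
proof (cases "b \<ge> 1")
  case True
  have "b ^ a \<le> b ^ (c + k)" using True assms(2) by (intro power_increasing)
  also have "\<dots> \<le> max b (1 / b) ^ k * b ^ c"
    using assms(1) by (simp add: power_add mult.commute mult_right_mono power_mono)
  finally show ?thesis .
next
  case False
  have "b ^ a * b ^ k = b ^ (a + k)" by (simp add: power_add)
  also have "\<dots> \<le> b ^ c" using False assms(1,3) by (intro power_decreasing) auto
  finally have "b ^ a \<le> (1 / b) ^ k * b ^ c" using assms(1) by (simp add: field_simps power_divide)
  also have "\<dots> \<le> max b (1 / b) ^ k * b ^ c"
    using assms(1) by (intro mult_right_mono power_mono) auto
  finally show ?thesis .
qed

lemma geometric_sequence_far_from_one:
  fixes c \<rho> :: real
  assumes "c > 0" "0 < \<rho>" "\<rho> < 1" "m \<noteq> n"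
  shows "(1 - \<rho>) / 4 \<le> \<bar>c * \<rho> ^ m - 1\<bar> \<or> (1 - \<rho>) / 4 \<le> \<bar>c * \<rho> ^ n - 1\<bar>"
proof -
  have "(1 - \<rho>) / 4 \<le> \<bar>c * \<rho> ^ i - 1\<bar> \<or> (1 - \<rho>) / 4 \<le> \<bar>c * \<rho> ^ j - 1\<bar>" if "i < j" for i j
  proof (rule ccontr)
    define x y where "x = c * \<rho> ^ i" and "y = c * \<rho> ^ j"
    assume "\<not> ?thesis"
    then have "\<bar>x - 1\<bar> < (1 - \<rho>) / 4" "\<bar>y - 1\<bar> < (1 - \<rho>) / 4" unfolding x_def y_def by auto
    then have "x - y < (1 - \<rho>) / 2" "1 / 2 < x"
      using assms(2) unfolding abs_less_iff by (simp_all add: field_simps)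
    have "\<rho> ^ j \<le> \<rho> ^ Suc i" using assms(2,3) that by (intro power_decreasing) auto
    then have "y \<le> \<rho> * x" using assms(1) unfolding x_def y_def by simp
    then have "(1 - \<rho>) * x \<le> x - y" by (simp add: algebra_simps)
    moreover have "(1 - \<rho>) * (1 / 2) < (1 - \<rho>) * x" using \<open>1 / 2 < x\<close> assms(3) by simp
    ultimately show False using \<open>x - y < (1 - \<rho>) / 2\<close> by linarith
  qed
  then show ?thesis using assms(4) by (metis linorder_neqE_nat)
qed

lemma partition_function_pos:
  "finite V \<Longrightarrow> 0 < \<beta> \<Longrightarrow> 0 < (\<Sum>\<tau>\<in>spins V. ising_weight E \<beta> \<tau>)"
  by (intro sum_pos) (auto simp: finite_spins spins_nonempty ising_weight_def)

lemma ising_gibbs_pos: "finite V \<Longrightarrow> 0 < \<beta> \<Longrightarrow> 0 < ising_gibbs V E \<beta> \<sigma>"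
  using partition_function_pos by (simp add: ising_gibbs_def ising_weight_def)

lemma sum_ising_gibbs: "finite V \<Longrightarrow> 0 < \<beta> \<Longrightarrow> (\<Sum>\<sigma>\<in>spins V. ising_gibbs V E \<beta> \<sigma>) = 1"
  using partition_function_pos[of V \<beta> E] by (simp add: ising_gibbs_def flip: sum_divide_distrib)

lemma ising_gibbs_ratio:
  assumes "finite V" "0 < \<beta>" "0 < \<beta>'"
  obtains c where "c > 0"
    and "\<And>\<sigma>. ising_gibbs V E \<beta>' \<sigma> / ising_gibbs V E \<beta> \<sigma> = c * (\<beta>' / \<beta>) ^ mono_edges E \<sigma>"
proof
  let ?Z = "\<lambda>\<gamma>. \<Sum>\<tau>\<in>spins V. ising_weight E \<gamma> \<tau>"
  show "?Z \<beta> / ?Z \<beta>' > 0" using partition_function_pos assms by simp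
  show "ising_gibbs V E \<beta>' \<sigma> / ising_gibbs V E \<beta> \<sigma> = ?Z \<beta> / ?Z \<beta>' * (\<beta>' / \<beta>) ^ mono_edges E \<sigma>"
    for \<sigma>
    using assms by (simp add: ising_gibbs_def ising_weight_def power_divide)
qed

lemma ising_gibbs_le_max_inverse_power:
  assumes "finite V" "0 < \<beta>" "\<bar>int (mono_edges E \<sigma>) - int (mono_edges E \<tau>)\<bar> \<le> int k"
  shows "ising_gibbs V E \<beta> \<sigma> \<le> max \<beta> (1 / \<beta>) ^ k * ising_gibbs V E \<beta> \<tau>"
proof -
  have "\<beta> ^ mono_edges E \<sigma> \<le> max \<beta> (1 / \<beta>) ^ k * \<beta> ^ mono_edges E \<tau>"
    using assms(3) by (intro power_le_max_inverse_power[OF assms(2)]) linarith+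
  then show ?thesis
    using partition_function_pos[OF assms(1,2), of E]
    by (simp add: ising_gibbs_def ising_weight_def divide_right_mono)
qed

lemma flip_square_far_configuration:
  assumes G: "simple_graph V E" and "{u, v} \<in> E" and deg: "\<forall>w\<in>V. card (incident_edges E w) \<le> d"
    and "\<sigma> \<in> spins V" and "0 < \<beta>'" "\<beta>' < \<beta>"
  obtains \<tau> where "\<tau> \<in> {\<sigma>, flip v \<sigma>, flip u \<sigma>, flip v (flip u \<sigma>)}"
    and "(1 - \<beta>' / \<beta>) / 4 \<le> \<bar>ising_gibbs V E \<beta>' \<tau> / ising_gibbs V E \<beta> \<tau> - 1\<bar>"
    and "ising_gibbs V E \<beta> \<sigma> \<le> max \<beta> (1 / \<beta>) ^ (2 * d) * ising_gibbs V E \<beta> \<tau>"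
proof -
  let ?Q = "{\<sigma>, flip v \<sigma>, flip u \<sigma>, flip v (flip u \<sigma>)}"
  have "finite V" "u \<in> V" "v \<in> V" "0 < \<beta>" "0 < \<beta>' / \<beta>" "\<beta>' / \<beta> < 1"
    using assms unfolding simple_graph_def by auto
  have "flip u \<sigma> \<in> spins V" using flip_in_spins[OF \<open>\<sigma> \<in> spins V\<close> \<open>u \<in> V\<close>] .
  have "card (incident_edges E u) \<le> d" "card (incident_edges E v) \<le> d"
    using deg \<open>u \<in> V\<close> \<open>v \<in> V\<close> by auto
  then have near: "\<bar>int (mono_edges E \<sigma>) - int (mono_edges E \<tau>)\<bar> \<le> int (2 * d)" if "\<tau> \<in> ?Q" for \<tau>
    using that mono_edges_flip_close[OF G \<open>\<sigma> \<in> spins V\<close>, of u]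
      mono_edges_flip_close[OF G \<open>\<sigma> \<in> spins V\<close>, of v]
      mono_edges_flip_close[OF G \<open>flip u \<sigma> \<in> spins V\<close>, of v] by auto
  obtain \<tau>\<^sub>1 \<tau>\<^sub>2 where "\<tau>\<^sub>1 \<in> ?Q" "\<tau>\<^sub>2 \<in> ?Q" "mono_edges E \<tau>\<^sub>1 \<noteq> mono_edges E \<tau>\<^sub>2"
    using mono_edges_flip_square[OF G \<open>{u, v} \<in> E\<close> \<open>\<sigma> \<in> spins V\<close>] by blast
  moreover obtain c where "c > 0"
    and "\<And>\<tau>. ising_gibbs V E \<beta>' \<tau> / ising_gibbs V E \<beta> \<tau> = c * (\<beta>' / \<beta>) ^ mono_edges E \<tau>"
    using ising_gibbs_ratio[OF \<open>finite V\<close> \<open>0 < \<beta>\<close> \<open>0 < \<beta>'\<close>] by blast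
  ultimately obtain \<tau> where "\<tau> \<in> ?Q"
    and "(1 - \<beta>' / \<beta>) / 4 \<le> \<bar>ising_gibbs V E \<beta>' \<tau> / ising_gibbs V E \<beta> \<tau> - 1\<bar>"
    using geometric_sequence_far_from_one[of c "\<beta>' / \<beta>"] \<open>0 < \<beta>' / \<beta>\<close> \<open>\<beta>' / \<beta> < 1\<close> by metis
  moreover have "ising_gibbs V E \<beta> \<sigma> \<le> max \<beta> (1 / \<beta>) ^ (2 * d) * ising_gibbs V E \<beta> \<tau>"
    using ising_gibbs_le_max_inverse_power[OF \<open>finite V\<close> \<open>0 < \<beta>\<close> near[OF \<open>\<tau> \<in> ?Q\<close>]] .
  ultimately show ?thesis using that by blast
qed

lemma chi_alpha_div_ising_lower_bound:
  assumes G: "simple_graph V E" and "E \<noteq> {}" and deg: "\<forall>v\<in>V. card (incident_edges E v) \<le> d"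
    and "0 < \<beta>'" "\<beta>' < \<beta>"
  shows "((1 - \<beta>' / \<beta>) / 4) ^ \<alpha> / (8 * max \<beta> (1 / \<beta>) ^ (2 * d))
    \<le> chi_alpha_div \<alpha> (spins V) (ising_gibbs V E \<beta>') (ising_gibbs V E \<beta>)"
proof -
  define \<nu> \<mu> where "\<nu> = ising_gibbs V E \<beta>'" and "\<mu> = ising_gibbs V E \<beta>"
  define \<delta> K where "\<delta> = (1 - \<beta>' / \<beta>) / 4" and "K = max \<beta> (1 / \<beta>) ^ (2 * d)"
  define h where "h \<sigma> = \<mu> \<sigma> * \<bar>\<nu> \<sigma> / \<mu> \<sigma> - 1\<bar> ^ \<alpha>" for \<sigma>
  have "0 < \<beta>" "finite V" "0 \<le> \<delta>" using assms G by (auto simp: simple_graph_def \<delta>_def)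
  have \<mu>_pos: "0 < \<mu> \<sigma>" for \<sigma>
    unfolding \<mu>_def using ising_gibbs_pos[OF \<open>finite V\<close> \<open>0 < \<beta>\<close>] .
  have h_nonneg: "0 \<le> h \<sigma>" for \<sigma> using \<mu>_pos[of \<sigma>] by (simp add: h_def)
  obtain e where "e \<in> E" using \<open>E \<noteq> {}\<close> by blast
  then obtain u v where "{u, v} \<in> E" "u \<in> V" "v \<in> V" using G by (metis simple_graph_edgeE)
  have local_bound: "\<delta> ^ \<alpha> * \<mu> \<sigma> \<le> K * (h \<sigma> + h (flip v \<sigma>) + h (flip u \<sigma>) + h (flip v (flip u \<sigma>)))"
    if "\<sigma> \<in> spins V" for \<sigma>
  proof -
    obtain \<tau> where \<tau>: "\<tau> \<in> {\<sigma>, flip v \<sigma>, flip u \<sigma>, flip v (flip u \<sigma>)}"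
      and "\<delta> \<le> \<bar>\<nu> \<tau> / \<mu> \<tau> - 1\<bar>" and "\<mu> \<sigma> \<le> K * \<mu> \<tau>"
      using flip_square_far_configuration[OF G \<open>{u, v} \<in> E\<close> deg \<open>\<sigma> \<in> spins V\<close> assms(4,5)]
      unfolding \<nu>_def \<mu>_def \<delta>_def K_def by blast
    then have "\<delta> ^ \<alpha> * \<mu> \<sigma> \<le> \<bar>\<nu> \<tau> / \<mu> \<tau> - 1\<bar> ^ \<alpha> * (K * \<mu> \<tau>)"
      using \<mu>_pos[of \<sigma>] \<open>0 \<le> \<delta>\<close> by (intro mult_mono power_mono) auto
    also have "\<dots> = K * h \<tau>" by (simp add: h_def)
    also have "\<dots> \<le> K * (h \<sigma> + h (flip v \<sigma>) + h (flip u \<sigma>) + h (flip v (flip u \<sigma>)))"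
      using \<tau> h_nonneg by (intro mult_left_mono) (auto simp: K_def)
    finally show ?thesis .
  qed
  have "\<delta> ^ \<alpha> = (\<Sum>\<sigma>\<in>spins V. \<delta> ^ \<alpha> * \<mu> \<sigma>)"
    using sum_ising_gibbs[OF \<open>finite V\<close> \<open>0 < \<beta>\<close>] by (simp add: \<mu>_def flip: sum_distrib_left)
  also have "\<dots> \<le> (\<Sum>\<sigma>\<in>spins V. K * (h \<sigma> + h (flip v \<sigma>) + h (flip u \<sigma>) + h (flip v (flip u \<sigma>))))"
    using local_bound by (rule sum_mono)
  also have "\<dots> = K * ((\<Sum>\<sigma>\<in>spins V. h \<sigma>) + (\<Sum>\<sigma>\<in>spins V. h (flip v \<sigma>))
      + (\<Sum>\<sigma>\<in>spins V. h (flip u \<sigma>)) + (\<Sum>\<sigma>\<in>spins V. h (flip v (flip u \<sigma>))))"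
    by (simp add: sum.distrib flip: sum_distrib_left)
  also have "\<dots> = 4 * K * (\<Sum>\<sigma>\<in>spins V. h \<sigma>)"
    using sum_spins_flip[OF \<open>u \<in> V\<close>, of "\<lambda>\<sigma>. h (flip v \<sigma>)"] sum_spins_flip[OF \<open>u \<in> V\<close>, of h]
      sum_spins_flip[OF \<open>v \<in> V\<close>, of h]
    by simp
  also have "\<dots> = 8 * K * chi_alpha_div \<alpha> (spins V) \<nu> \<mu>"
    by (simp add: chi_alpha_div_def h_def sum_distrib_left mult_ac)
  finally show ?thesis
    using \<open>0 < \<beta>\<close> by (simp add: K_def \<delta>_def \<nu>_def \<mu>_def pos_divide_le_eq mult_ac)
qed

lemma abs_diff_one_power_le:
  fixes r :: real
  assumes "0 \<le> r"
  shows "\<bar>r - 1\<bar> ^ k \<le> (r + 1) ^ k"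
  using assms by (intro power_mono) auto

lemma plus_one_power_le:
  fixes r :: real
  assumes "0 \<le> r"
  shows "(r + 1) ^ k \<le> 2 ^ k * \<bar>r - 1\<bar> ^ k + 4 ^ k"
proof (cases "r \<ge> 3")
  case True
  then have "(r + 1) ^ k \<le> (2 * \<bar>r - 1\<bar>) ^ k" by (intro power_mono) auto
  then show ?thesis by (simp add: power_mult_distrib add_increasing2)
next
  case False
  then have "(r + 1) ^ k \<le> 4 ^ k" using assms by (intro power_mono) auto
  then show ?thesis by (simp add: add_increasing)
qed

lemma chi_alpha_div_comparable:
  fixes \<mu> \<nu> :: "'a \<Rightarrow> real"
  assumes "\<forall>\<sigma>\<in>\<Omega>. 0 < \<mu> \<sigma>" "sum \<mu> \<Omega> = 1" "\<forall>\<sigma>\<in>\<Omega>. 0 \<le> \<nu> \<sigma>"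
    and "0 < \<eta>" "\<eta> \<le> chi_alpha_div \<alpha> \<Omega> \<nu> \<mu>"
  defines "S \<equiv> \<Sum>\<sigma>\<in>\<Omega>. \<mu> \<sigma> * (\<nu> \<sigma> / \<mu> \<sigma> + 1) ^ \<alpha>"
    and "C \<equiv> 2 ^ (\<alpha> + 1) + 4 ^ \<alpha> / \<eta>"
  shows "S / C \<le> chi_alpha_div \<alpha> \<Omega> \<nu> \<mu> \<and> chi_alpha_div \<alpha> \<Omega> \<nu> \<mu> \<le> C * S"
proof -
  define D where "D = chi_alpha_div \<alpha> \<Omega> \<nu> \<mu>"
  have ratio_nonneg: "0 \<le> \<nu> \<sigma> / \<mu> \<sigma>" if "\<sigma> \<in> \<Omega>" for \<sigma>
    using assms(1,3) that by (simp add: less_imp_le)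
  have D: "2 * D = (\<Sum>\<sigma>\<in>\<Omega>. \<mu> \<sigma> * \<bar>\<nu> \<sigma> / \<mu> \<sigma> - 1\<bar> ^ \<alpha>)"
    by (simp add: D_def chi_alpha_div_def sum_distrib_left)
  have "S \<le> (\<Sum>\<sigma>\<in>\<Omega>. \<mu> \<sigma> * (2 ^ \<alpha> * \<bar>\<nu> \<sigma> / \<mu> \<sigma> - 1\<bar> ^ \<alpha> + 4 ^ \<alpha>))"
    unfolding S_def using assms(1) ratio_nonneg plus_one_power_le
    by (intro sum_mono mult_left_mono) (auto simp: less_imp_le)
  also have "\<dots> = 2 ^ \<alpha> * (\<Sum>\<sigma>\<in>\<Omega>. \<mu> \<sigma> * \<bar>\<nu> \<sigma> / \<mu> \<sigma> - 1\<bar> ^ \<alpha>) + 4 ^ \<alpha> * sum \<mu> \<Omega>"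
    by (simp add: algebra_simps sum.distrib sum_distrib_left sum_distrib_right)
  also have "\<dots> = 2 ^ (\<alpha> + 1) * D + 4 ^ \<alpha>"
    using assms(2) by (simp flip: D)
  also have "\<dots> \<le> C * D"
    using assms(4,5) by (simp add: C_def D_def algebra_simps pos_le_divide_eq)
  finally have "S \<le> C * D" .
  moreover have "2 * D \<le> S"
    unfolding D S_def using assms(1) ratio_nonneg abs_diff_one_power_le
    by (intro sum_mono mult_left_mono) (auto simp: less_imp_le)
  moreover have "1 \<le> C"
    unfolding C_def using assms(4) by (intro add_increasing2 one_le_power) auto
  moreover have "0 \<le> D" using assms(4,5) by (simp add: D_def)
  ultimately have "S / C \<le> D" "D \<le> C * S"
    by (simp_all add: divide_le_eq mult.commute order.trans[OF _ mult_le_cancel_right1[THEN iffD2]])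
  then show ?thesis unfolding D_def by simp
qed

theorem corollary7p3:
  fixes \<alpha> \<Delta> :: nat and \<beta>\<^sub>\<nu> \<beta>\<^sub>\<mu> :: real
  assumes "\<alpha> \<ge> 2" and "\<Delta> \<ge> 3"
    and "\<beta>\<^sub>\<mu> > \<beta>\<^sub>\<nu>" and "\<beta>\<^sub>\<nu> \<ge> (real \<Delta> - 2) / real \<Delta>"
    and "(\<beta>\<^sub>\<nu> / \<beta>\<^sub>\<mu>) ^ \<alpha> * \<beta>\<^sub>\<mu> < (real \<Delta> - 2) / real \<Delta>"
  shows "\<exists>C'>0. \<forall>V E. regular_graph \<Delta> V E \<and> V \<noteq> {} \<longrightarrow>
     (let \<nu> = ising_gibbs V E \<beta>\<^sub>\<nu>; \<mu> = ising_gibbs V E \<beta>\<^sub>\<mu>;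
          S = (\<Sum>\<sigma>\<in>spins V. \<mu> \<sigma> * (\<nu> \<sigma> / \<mu> \<sigma> + 1) ^ \<alpha>)
      in (1 / C') * S \<le> chi_alpha_div \<alpha> (spins V) \<nu> \<mu> \<and>
         chi_alpha_div \<alpha> (spins V) \<nu> \<mu> \<le> C' * S)"
proof -
  have "0 < (real \<Delta> - 2) / real \<Delta>" using assms(2) by simp
  then have "0 < \<beta>\<^sub>\<nu>" "0 < \<beta>\<^sub>\<mu>" using assms(3,4) by linarith+
  define \<eta> where "\<eta> = ((1 - \<beta>\<^sub>\<nu> / \<beta>\<^sub>\<mu>) / 4) ^ \<alpha> / (8 * max \<beta>\<^sub>\<mu> (1 / \<beta>\<^sub>\<mu>) ^ (2 * \<Delta>))"
  define C where "C = 2 ^ (\<alpha> + 1) + 4 ^ \<alpha> / \<eta>"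
  have "0 < \<eta>" using \<open>0 < \<beta>\<^sub>\<mu>\<close> assms(3) by (simp add: \<eta>_def)
  show ?thesis
  proof (intro exI[of _ C] conjI allI impI)
    show "0 < C" using \<open>0 < \<eta>\<close> by (simp add: C_def add_pos_nonneg)
    fix V E assume "regular_graph \<Delta> V E \<and> V \<noteq> {}"
    then have "simple_graph V E" "finite V" "E \<noteq> {}" "\<forall>v\<in>V. card (incident_edges E v) \<le> \<Delta>"
      using regular_graph_edges_nonempty[of \<Delta> V E] assms(2)
      by (auto simp: regular_graph_def simple_graph_def incident_edges_def)
    then have "\<eta> \<le> chi_alpha_div \<alpha> (spins V) (ising_gibbs V E \<beta>\<^sub>\<nu>) (ising_gibbs V E \<beta>\<^sub>\<mu>)"
      unfolding \<eta>_def using chi_alpha_div_ising_lower_bound \<open>0 < \<beta>\<^sub>\<nu>\<close> assms(3) by blast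
    then show "let \<nu> = ising_gibbs V E \<beta>\<^sub>\<nu>; \<mu> = ising_gibbs V E \<beta>\<^sub>\<mu>;
          S = (\<Sum>\<sigma>\<in>spins V. \<mu> \<sigma> * (\<nu> \<sigma> / \<mu> \<sigma> + 1) ^ \<alpha>)
      in (1 / C) * S \<le> chi_alpha_div \<alpha> (spins V) \<nu> \<mu> \<and> chi_alpha_div \<alpha> (spins V) \<nu> \<mu> \<le> C * S"
      using chi_alpha_div_comparable[of "spins V" "ising_gibbs V E \<beta>\<^sub>\<mu>" "ising_gibbs V E \<beta>\<^sub>\<nu>" \<eta> \<alpha>]
        ising_gibbs_pos[OF \<open>finite V\<close>] sum_ising_gibbs[OF \<open>finite V\<close>] \<open>0 < \<eta>\<close> \<open>0 < \<beta>\<^sub>\<nu>\<close> \<open>0 < \<beta>\<^sub>\<mu>\<close>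
      by (simp add: Let_def C_def less_imp_le)
  qed
qed

end
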